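(* For $n\ge 1$ let $\gamma_n$ be the unique closed geodesic on the modular surface $\Sigma_{\mathrm{Mod}}$ lifting to the geodesic $1/n$ on the once-punctured torus $\Sigma_{1,1}$ (under the 6-fold cover $\Sigma_{1,1}\to\Sigma_{\mathrm{Mod}}$). For $\Gamma_n:=\{\gamma_i\}_{i=1}^n$, the total length satisfies $\ell(\Gamma_n)\asymp n^2$.
   Context: $\Sigma_{\mathrm{Mod}}=\mathbb{H}^2/\mathrm{PSL}(2,\mathbb{Z})$ with its hyperbolic metric; $\Sigma_{1,1}$ is the once-punctured torus with the pulled-back metric, and $1/n$ denotes the closed geodesic in the free homotopy class of the simple closed curve of slope $1/n$. $\ell(\Gamma_n)=\sum_{i=1}^n\ell(\gamma_i)$. $f(n)\asymp g(n)$ means there are constants $A>0,B,C>0,D$ with $Ag(n)+B\le f(n)\le Cg(n)+D$ for all $n$. *)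

theory Defs
  imports "HOL-Analysis.Analysis"
begin

text \<open>Integer 2x2 matrices (a,b,c,d) = [[a,b],[c,d]].\<close>
type_synonym mat2 = "int \<times> int \<times> int \<times> int"

fun mmul :: "mat2 \<Rightarrow> mat2 \<Rightarrow> mat2" where
  "mmul (a,b,c,d) (e,f,g,h) = (a*e + b*g, a*f + b*h, c*e + d*g, c*f + d*h)"

fun mneg :: "mat2 \<Rightarrow> mat2" where
  "mneg (a,b,c,d) = (-a,-b,-c,-d)"

fun mdet :: "mat2 \<Rightarrow> int" where
  "mdet (a,b,c,d) = a*d - b*c"

primrec mpow :: "mat2 \<Rightarrow> nat \<Rightarrow> mat2" where
  "mpow M 0 = (1,0,0,1)"
| "mpow M (Suc k) = mmul M (mpow M k)"

definition SL2Z :: "mat2 set" where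
  "SL2Z = {M. mdet M = 1}"

definition upper_half :: "complex set" where
  "upper_half = {z. Im z > 0}"

definition hdist :: "complex \<Rightarrow> complex \<Rightarrow> real" where
  "hdist z w = arcosh (1 + (cmod (z - w))\<^sup>2 / (2 * Im z * Im w))"

fun moebius :: "mat2 \<Rightarrow> complex \<Rightarrow> complex" where
  "moebius (a,b,c,d) z = (of_int a * z + of_int b) / (of_int c * z + of_int d)"

text \<open>Translation length of a deck transformation: the length of the closed
  geodesic in its free homotopy class.\<close>
definition transl_len :: "mat2 \<Rightarrow> real" where
  "transl_len M = (INF z\<in>upper_half. hdist z (moebius M z))"

text \<open>Length of the primitive closed geodesic on the modular surface
  H^2/PSL(2,Z) underlying the (possibly multiply traversed) closed geodesic
  of the deck element M in PSL(2,Z): minimal translation length of a root of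
  +-M in SL(2,Z).\<close>
definition modular_geod_len :: "mat2 \<Rightarrow> real" where
  "modular_geod_len M = Inf {transl_len R | R k. R \<in> SL2Z \<and> k \<ge> 1 \<and>
                                  (mpow R k = M \<or> mpow R k = mneg M)}"

text \<open>The once-punctured (modular) torus is H^2/G', G' the commutator subgroup
  of PSL(2,Z), freely generated by the images of torusA and torusB, which
  represent the curves of slope 1/0 and 0/1.\<close>
definition torusA :: mat2 where "torusA = (2,1,1,1)"
definition torusB :: mat2 where "torusB = (1,1,1,2)"

text \<open>Deck element of the simple closed curve of slope 1/n.\<close>
definition slope_elt :: "nat \<Rightarrow> mat2" where
  "slope_elt n = mmul torusA (mpow torusB n)"

definition gamma_len :: "nat \<Rightarrow> real" where
  "gamma_len n = modular_geod_len (slope_elt n)"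

definition total_len :: "nat \<Rightarrow> real" where
  "total_len n = (\<Sum>i=1..n. gamma_len i)"

end

theory Submission
  imports Defs
begin

text \<open>The curve of slope \<open>1/n\<close> is represented by \<open>M\<^sub>n = A B\<^sup>n\<close>, whose trace is \<open>3(u + v)\<close>
  with \<open>2\<^sup>n \<le> u + v \<le> 3\<^sup>n\<close>. Up to sign, \<open>M\<^sub>n\<close> is not a proper power in \<open>SL(2,\<int>)\<close>, so
  \<open>\<gamma>\<^sub>n\<close> has the translation length of \<open>M\<^sub>n\<close>. That length is at least
  \<open>ln (tr\<^sup>2/2 - 1)\<close> and at most the displacement of \<open>i\<close>, which is logarithmic in the entries;
  hence \<open>\<ell>(\<gamma>\<^sub>n)\<close> is squeezed between two linear functions of \<open>n\<close>, and summing gives \<open>n\<^sup>2\<close>.\<close>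

lemma moebius_denom_nonzero:
  assumes "a*d - b*c = 1" "Im z > 0"
  shows "of_int c * z + of_int d \<noteq> 0"
proof
  assume "of_int c * z + of_int d = 0"
  then have "real_of_int c * Im z = 0" "real_of_int c * Re z + d = 0"
    by (auto simp: complex_eq_iff)
  then have "c = 0" "d = 0" using assms(2) by auto
  then show False using assms(1) by simp
qed

lemma Im_moebius:
  assumes "a*d - b*c = 1" "Im z > 0"
  shows "Im (moebius (a,b,c,d) z) = Im z / (cmod (of_int c * z + of_int d))\<^sup>2"
proof -
  have "real_of_int a * real_of_int d - real_of_int b * real_of_int c = 1"
    using assms(1) by (metis of_int_1 of_int_diff of_int_mult)
  with moebius_denom_nonzero[OF assms] show ?thesis
    by (simp add: Im_divide cmod_power2 algebra_simps)
qed

lemma hdist_moebius: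
  assumes "a*d - b*c = 1" "Im z > 0"
  shows "hdist z (moebius (a,b,c,d) z) =
    arcosh (1 + (cmod (of_int c * z\<^sup>2 + of_int (d-a) * z - of_int b))\<^sup>2 / (2 * (Im z)\<^sup>2))"
proof -
  define w where "w = of_int c * z + of_int d"
  define P where "P = of_int c * z\<^sup>2 + of_int (d-a) * z - of_int b"
  have w: "w \<noteq> 0" using moebius_denom_nonzero[OF assms] by (simp add: w_def)
  have "z - moebius (a,b,c,d) z = P / w"
    using w by (simp add: w_def P_def field_simps power2_eq_square)
  then have "(cmod (z - moebius (a,b,c,d) z))\<^sup>2 / (2 * Im z * Im (moebius (a,b,c,d) z))
      = ((cmod P)\<^sup>2 / (cmod w)\<^sup>2) / (2 * Im z * (Im z / (cmod w)\<^sup>2))"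
    unfolding Im_moebius[OF assms] by (simp add: norm_divide power_divide w_def)
  also have "\<dots> = (cmod P)\<^sup>2 / (2 * (Im z)\<^sup>2)"
    using w assms(2) by (simp add: field_simps power2_eq_square)
  finally show ?thesis by (simp add: hdist_def P_def)
qed

text \<open>The polynomial vanishes at the fixed points of the Moebius map; writing \<open>z = x + i y\<close>,
  its squared modulus is a square plus \<open>y\<^sup>2\<close> times the discriminant \<open>(a + d)\<^sup>2 - 4\<close>.\<close>
lemma fixpoint_poly_norm_ge:
  fixes z :: complex
  assumes "a*d - b*c = 1"
  shows "(Im z)\<^sup>2 * ((real_of_int (a+d))\<^sup>2 - 4)
    \<le> (cmod (of_int c * z\<^sup>2 + of_int (d-a) * z - of_int b))\<^sup>2"
proof -
  have det: "real_of_int a * real_of_int d = 1 + real_of_int b * real_of_int c"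
    using assms by (metis add.commute diff_eq_eq of_int_1 of_int_add of_int_mult)
  obtain x y where z: "z = Complex x y" by (cases z)
  define Q where "Q = c*x\<^sup>2 + (d-a)*x - b"
  have "(cmod (of_int c * z\<^sup>2 + of_int (d-a) * z - of_int b))\<^sup>2
      = (Q - c*y\<^sup>2)\<^sup>2 + (y*(2*c*x + (d-a)))\<^sup>2"
    unfolding z Q_def cmod_power2 by (simp add: power2_eq_square algebra_simps)
  also have "\<dots> = (Q + c*y\<^sup>2)\<^sup>2 + y\<^sup>2 * ((real_of_int (a+d))\<^sup>2 - 4)"
    unfolding Q_def using det by (simp add: power2_eq_square algebra_simps)
  finally show ?thesis using z by simp
qed

lemma arcosh_real_mono: "1 \<le> (x::real) \<Longrightarrow> x \<le> y \<Longrightarrow> arcosh x \<le> arcosh y"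
  by (metis arcosh_less_iff_real linorder_not_less order_trans)

lemma ln_le_arcosh: "1 \<le> (x::real) \<Longrightarrow> ln x \<le> arcosh x"
  by (simp add: arcosh_real_def add_pos_nonneg)

lemma arcosh_le_ln_double: "1 \<le> (x::real) \<Longrightarrow> arcosh x \<le> ln (2*x)"
  by (simp add: arcosh_real_def add_pos_nonneg real_sqrt_le_iff')

lemma four_le_sq_of_int:
  assumes "2 \<le> \<bar>t\<bar>"
  shows "4 \<le> (real_of_int t)\<^sup>2"
proof -
  have "2 \<le> \<bar>real_of_int t\<bar>" using assms by linarith
  then have "2 * 2 \<le> \<bar>real_of_int t\<bar> * \<bar>real_of_int t\<bar>" by (intro mult_mono) auto
  then show ?thesis by (simp add: power2_eq_square)
qed

lemma hdist_moebius_ge_trace: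
  assumes "a*d - b*c = 1" "Im z > 0" "\<bar>a+d\<bar> \<ge> 2"
  shows "arcosh ((real_of_int (a+d))\<^sup>2 / 2 - 1) \<le> hdist z (moebius (a,b,c,d) z)"
proof -
  let ?P = "of_int c * z\<^sup>2 + of_int (d-a) * z - of_int b"
  have "(real_of_int (a+d))\<^sup>2 - 4 \<le> (cmod ?P)\<^sup>2 / (Im z)\<^sup>2"
    using fixpoint_poly_norm_ge[OF assms(1), of z] assms(2) by (simp add: field_simps)
  then have "(real_of_int (a+d))\<^sup>2 / 2 - 1 \<le> 1 + (cmod ?P)\<^sup>2 / (2 * (Im z)\<^sup>2)"
    by (simp add: field_simps)
  with four_le_sq_of_int[OF assms(3)] show ?thesis
    unfolding hdist_moebius[OF assms(1,2)] by (intro arcosh_real_mono) simp_all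
qed

lemma ln_trace_le_transl_len:
  assumes "a*d - b*c = 1" "\<bar>a+d\<bar> \<ge> 2"
  shows "ln ((real_of_int (a+d))\<^sup>2 / 2 - 1) \<le> transl_len (a,b,c,d)"
proof -
  have "ln ((real_of_int (a+d))\<^sup>2 / 2 - 1) \<le> arcosh ((real_of_int (a+d))\<^sup>2 / 2 - 1)"
    using four_le_sq_of_int[OF assms(2)] by (intro ln_le_arcosh) simp
  also have "\<dots> \<le> transl_len (a,b,c,d)"
    unfolding transl_len_def
  proof (rule cINF_greatest)
    show "upper_half \<noteq> {}"
      unfolding upper_half_def by (auto intro!: exI[of _ \<i>])
  qed (use hdist_moebius_ge_trace[OF assms(1) _ assms(2)] in \<open>simp add: upper_half_def\<close>)
  finally show ?thesis .
qed

lemma transl_len_le_ln: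
  assumes "a*d - b*c = 1"
  shows "transl_len (a,b,c,d) \<le> ln (2 + (real_of_int (b+c))\<^sup>2 + (real_of_int (d-a))\<^sup>2)"
proof -
  have "bdd_below ((\<lambda>z. hdist z (moebius (a,b,c,d) z)) ` upper_half)"
    by (rule bdd_belowI[of _ 0])
      (auto simp: upper_half_def hdist_moebius[OF assms] simp del: moebius.simps)
  then have "transl_len (a,b,c,d) \<le> hdist \<i> (moebius (a,b,c,d) \<i>)"
    unfolding transl_len_def by (rule cINF_lower) (simp add: upper_half_def)
  also have "\<dots> = arcosh (1 + ((real_of_int (b+c))\<^sup>2 + (real_of_int (d-a))\<^sup>2) / 2)"
  proof -
    have "of_int c * \<i>\<^sup>2 + of_int (d - a) * \<i> - of_int b = Complex (-(b+c)) (d-a)"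
      by (simp add: complex_eq_iff)
    moreover have "(cmod (Complex (-(b+c)) (d-a)))\<^sup>2 = (real_of_int (b+c))\<^sup>2 + (real_of_int (d-a))\<^sup>2"
      unfolding cmod_power2 by (simp add: power2_eq_square algebra_simps)
    ultimately show ?thesis
      using hdist_moebius[OF assms, of \<i>] by simp
  qed
  also have "\<dots> \<le> ln (2 * (1 + ((real_of_int (b+c))\<^sup>2 + (real_of_int (d-a))\<^sup>2) / 2))"
    by (rule arcosh_le_ln_double) simp
  also have "\<dots> = ln (2 + (real_of_int (b+c))\<^sup>2 + (real_of_int (d-a))\<^sup>2)"
  proof -
    have "2 * (1 + x / 2) = 2 + x" for x :: real by simp
    then show ?thesis by (simp only: add.assoc)
  qed
  finally show ?thesis .
qed

lemma moebius_mneg: "moebius (mneg M) = moebius M"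
proof
  fix z
  have "(- p - q) / (- r - s) = (p + q) / (r + s)" for p q r s :: complex
  proof -
    have "- p - q = -(p+q)" "- r - s = -(r+s)" by simp_all
    then show ?thesis by (simp only: minus_divide_divide)
  qed
  then show "moebius (mneg M) z = moebius M z" by (cases M) simp
qed

lemma transl_len_mneg: "transl_len (mneg M) = transl_len M"
  unfolding transl_len_def moebius_mneg ..

text \<open>Lucas sequences \<open>U\<^sub>k(t, 1)\<close> and \<open>V\<^sub>k(t, 1)\<close>: for \<open>M \<in> SL(2,\<int>)\<close> of trace \<open>t\<close>,
  Cayley--Hamilton gives \<open>M\<^bsup>k\<^esup> = U\<^sub>k M - U\<^sub>k\<^sub>-\<^sub>1 I\<close> and \<open>tr M\<^bsup>k\<^esup> = V\<^sub>k\<close>.\<close>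
fun lucas_U :: "int \<Rightarrow> nat \<Rightarrow> int" where
  "lucas_U t 0 = 0"
| "lucas_U t (Suc 0) = 1"
| "lucas_U t (Suc (Suc k)) = t * lucas_U t (Suc k) - lucas_U t k"

fun lucas_V :: "int \<Rightarrow> nat \<Rightarrow> int" where
  "lucas_V t 0 = 2"
| "lucas_V t (Suc 0) = t"
| "lucas_V t (Suc (Suc k)) = t * lucas_V t (Suc k) - lucas_V t k"

lemma mpow_Suc_lucas:
  assumes "a*d - b*c = 1"
  shows "mpow (a,b,c,d) (Suc k) =
    (lucas_U (a+d) (Suc k) * a - lucas_U (a+d) k, lucas_U (a+d) (Suc k) * b,
     lucas_U (a+d) (Suc k) * c, lucas_U (a+d) (Suc k) * d - lucas_U (a+d) k)"
proof (induction k)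
  case 0
  then show ?case by simp
next
  case (Suc k)
  let ?s = "lucas_U (a+d) (Suc k)" and ?r = "lucas_U (a+d) k"
  have "mpow (a,b,c,d) (Suc (Suc k)) = mmul (a,b,c,d) (?s*a - ?r, ?s*b, ?s*c, ?s*d - ?r)"
    using Suc by simp
  also have "\<dots> = (((a+d) * ?s - ?r) * a - ?s, ((a+d) * ?s - ?r) * b,
     ((a+d) * ?s - ?r) * c, ((a+d) * ?s - ?r) * d - ?s)"
    using assms by simp algebra
  finally show ?case by simp
qed

lemma lucas_V_Suc: "lucas_V t (Suc k) = t * lucas_U t (Suc k) - 2 * lucas_U t k"
proof (induction t k rule: lucas_U.induct)
  case (3 t k)
  have "lucas_V t (Suc (Suc (Suc k))) = t * lucas_V t (Suc (Suc k)) - lucas_V t (Suc k)"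
    by simp
  also have "\<dots> = t * lucas_U t (Suc (Suc (Suc k))) - 2 * lucas_U t (Suc (Suc k))"
    unfolding 3 by (simp add: algebra_simps)
  finally show ?case .
qed simp_all

lemma lucas_V_cos:
  assumes "\<bar>t\<bar> \<le> 2"
  shows "real_of_int (lucas_V t k) = 2 * cos (real k * arccos (t/2))"
proof -
  define \<theta> where "\<theta> = arccos (real_of_int t / 2)"
  have "real_of_int t = 2 * cos \<theta>"
    using assms unfolding \<theta>_def by (subst cos_arccos_abs) auto
  moreover have "cos (real (Suc (Suc k)) * \<theta>) = 2 * cos \<theta> * cos (real (Suc k) * \<theta>) - cos (real k * \<theta>)"
    for k
  proof -
    have "real (Suc (Suc k)) * \<theta> = real (Suc k) * \<theta> + \<theta>" "real k * \<theta> = real (Suc k) * \<theta> - \<theta>"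
      by (simp_all add: algebra_simps)
    then show ?thesis by (simp only: cos_add cos_diff) (simp add: algebra_simps)
  qed
  ultimately have "real_of_int (lucas_V t k) = 2 * cos (real k * \<theta>)"
    by (induction t k rule: lucas_V.induct) simp_all
  then show ?thesis unfolding \<theta>_def .
qed

lemma abs_lucas_V_le: "\<bar>t\<bar> \<le> 2 \<Longrightarrow> \<bar>lucas_V t k\<bar> \<le> 2"
  using lucas_V_cos[of t k] abs_cos_le_one[of "real k * arccos (t/2)"] by linarith

lemma abs_lucas_U_Suc_gt:
  assumes "\<bar>t\<bar> \<ge> 2"
  shows "\<bar>lucas_U t k\<bar> < \<bar>lucas_U t (Suc k)\<bar>"
proof (induction k)
  case (Suc k)
  have "2 * \<bar>lucas_U t (Suc k)\<bar> \<le> \<bar>t * lucas_U t (Suc k)\<bar>"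
    using assms by (simp add: abs_mult mult_right_mono)
  then show ?case using Suc by simp
qed simp

lemma abs_lucas_U_ge:
  assumes "\<bar>t\<bar> \<ge> 2" "k \<ge> 2"
  shows "\<bar>t\<bar> \<le> \<bar>lucas_U t k\<bar>"
  using assms(2)
proof (induction k rule: dec_induct)
  case (step k)
  then show ?case using abs_lucas_U_Suc_gt[OF assms(1), of k] by linarith
qed (simp add: numeral_2_eq_2)

text \<open>If \<open>\<bar>tr R\<bar> \<le> 2\<close>, then \<open>\<bar>tr R\<^bsup>k\<^esup>\<bar> \<le> 2\<close>; otherwise \<open>U\<^sub>k\<close> divides the off-diagonal
  entries of \<open>R\<^bsup>k\<^esup>\<close> and exceeds \<open>2\<close> in absolute value as soon as \<open>k \<ge> 2\<close>.\<close>
lemma mpow_eq_pm_imp_exponent_1: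
  assumes "a*d - b*c = 1" "k \<ge> 1"
    and pow: "mpow (a,b,c,d) k = (p,q,r,s) \<or> mpow (a,b,c,d) k = mneg (p,q,r,s)"
    and "\<bar>p + s\<bar> > 2" "gcd q r dvd 2"
  shows "k = 1"
proof -
  obtain j where k: "k = Suc j" using assms(2) by (cases k) auto
  define t where "t = a + d"
  define U where "U = lucas_U t (Suc j)"
  define U' where "U' = lucas_U t j"
  have "mpow (a,b,c,d) k = (U*a - U', U*b, U*c, U*d - U')"
    unfolding k U_def U'_def t_def by (rule mpow_Suc_lucas[OF assms(1)])
  moreover have "(U*a - U') + (U*d - U') = lucas_V t (Suc j)"
    unfolding lucas_V_Suc U_def U'_def t_def by (simp add: algebra_simps)
  ultimately have tr: "\<bar>lucas_V t (Suc j)\<bar> = \<bar>p + s\<bar>"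
    and "q = U*b \<and> r = U*c \<or> q = -(U*b) \<and> r = -(U*c)"
    using pow by auto
  then have "U dvd q" "U dvd r" by auto
  then have "U dvd 2" using assms(5) by (meson dvd_trans gcd_greatest)
  then have "\<bar>U\<bar> \<le> 2" using zdvd_imp_le[of "\<bar>U\<bar>" 2] by simp
  moreover have "\<bar>t\<bar> > 2" using tr assms(4) abs_lucas_V_le[of t "Suc j"] by linarith
  ultimately have "\<not> Suc j \<ge> 2" using abs_lucas_U_ge[of t "Suc j"] unfolding U_def by linarith
  then show "k = 1" using k by simp
qed

lemma mpow_torusB:
  "\<exists>u v. mpow torusB n = (u, v, v, u+v) \<and> u \<ge> 1 \<and> v \<ge> 0 \<and> u*(u+v) - v\<^sup>2 = 1 \<and>
     2^n \<le> u+v \<and> u+v \<le> 3^n"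
proof (induction n)
  case (Suc n)
  then obtain u v where uv: "mpow torusB n = (u, v, v, u+v)" "u \<ge> 1" "v \<ge> 0"
    "u*(u+v) - v\<^sup>2 = 1" "2^n \<le> u+v" "u+v \<le> 3^n" by blast
  have "mpow torusB (Suc n) = (u+v, u+2 * v, u+2 * v, (u+v)+(u+2 * v))"
    using uv(1) by (simp add: torusB_def)
  moreover have "(u+v)*((u+v)+(u+2 * v)) - (u+2 * v)\<^sup>2 = 1"
    using uv(4) by (simp add: power2_eq_square algebra_simps)
  ultimately show ?case using uv by (intro exI[of _ "u+v"] exI[of _ "u+2 * v"]) auto
qed simp

lemma slope_elt_entries:
  obtains u v where "slope_elt n = (2*u+v, u+3 * v, u+v, u+2 * v)" "u \<ge> 1" "v \<ge> 0"
    "u*(u+v) - v\<^sup>2 = 1" "2^n \<le> u+v" "u+v \<le> 3^n"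
proof -
  obtain u v where uv: "mpow torusB n = (u, v, v, u+v)" "u \<ge> 1" "v \<ge> 0"
    "u*(u+v) - v\<^sup>2 = 1" "2^n \<le> u+v" "u+v \<le> 3^n"
    using mpow_torusB by blast
  have "slope_elt n = (2*u+v, u+3 * v, u+v, u+2 * v)"
    unfolding slope_elt_def uv(1) torusA_def by simp
  with uv that show ?thesis by blast
qed

lemma slope_elt_root:
  assumes "R \<in> SL2Z" "k \<ge> 1" and pow: "mpow R k = slope_elt n \<or> mpow R k = mneg (slope_elt n)"
  shows "R = slope_elt n \<or> R = mneg (slope_elt n)"
proof -
  obtain u v where M: "slope_elt n = (2*u+v, u+3 * v, u+v, u+2 * v)" "u \<ge> 1" "v \<ge> 0"
    and det_uv: "u*(u+v) - v\<^sup>2 = 1" and "2^n \<le> u+v" "u+v \<le> 3^n"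
    by (rule slope_elt_entries)
  have gcd_dvd: "gcd (u+3 * v) (u+v) dvd 2"
  proof -
    let ?g = "gcd (u+3 * v) (u+v)"
    have "?g dvd (u+3 * v) - (u+v)" by (intro dvd_diff gcd_dvd1 gcd_dvd2)
    then have "?g dvd 2 * v" by (simp add: algebra_simps)
    then have "?g dvd v * (2 * v)" by (rule dvd_mult)
    moreover have "?g dvd (2*u) * (u+v)" by simp
    ultimately have "?g dvd (2*u) * (u+v) - v * (2 * v)" by (rule dvd_diff[rotated])
    also have "(2*u) * (u+v) - v * (2 * v) = 2"
      using det_uv by (simp add: power2_eq_square algebra_simps)
    finally show ?thesis .
  qed
  obtain a b c d where R: "R = (a,b,c,d)" by (cases R) auto
  have det: "a*d - b*c = 1" using assms(1) unfolding R SL2Z_def by simp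
  have "k = 1"
    using pow unfolding R M(1)
    by (rule mpow_eq_pm_imp_exponent_1[OF det assms(2)]) (use M(2,3) gcd_dvd in simp_all)
  then show ?thesis using pow by (cases R) simp
qed

lemma gamma_len_eq_transl_len: "gamma_len n = transl_len (slope_elt n)"
proof -
  let ?M = "slope_elt n"
  have "?M \<in> SL2Z"
  proof -
    obtain u v where "?M = (2*u+v, u+3 * v, u+v, u+2 * v)" "u \<ge> 1" "v \<ge> 0"
      and "u*(u+v) - v\<^sup>2 = 1" "2^n \<le> u+v" "u+v \<le> 3^n"
      by (rule slope_elt_entries)
    then show ?thesis unfolding SL2Z_def by (simp add: power2_eq_square algebra_simps)
  qed
  have "{transl_len R | R k. R \<in> SL2Z \<and> k \<ge> 1 \<and> (mpow R k = ?M \<or> mpow R k = mneg ?M)}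
        = {transl_len ?M}"
  proof (intro equalityI subsetI)
    fix x
    assume "x \<in> {transl_len R | R k. R \<in> SL2Z \<and> k \<ge> 1 \<and> (mpow R k = ?M \<or> mpow R k = mneg ?M)}"
    then obtain R k where "x = transl_len R" "R \<in> SL2Z" "k \<ge> 1" "mpow R k = ?M \<or> mpow R k = mneg ?M"
      by blast
    with slope_elt_root show "x \<in> {transl_len ?M}" using transl_len_mneg by blast
  next
    fix x assume "x \<in> {transl_len ?M}"
    moreover have "mpow ?M 1 = ?M" by (cases ?M) simp
    ultimately show "x \<in> {transl_len R | R k. R \<in> SL2Z \<and> k \<ge> 1 \<and> (mpow R k = ?M \<or> mpow R k = mneg ?M)}"
      using \<open>?M \<in> SL2Z\<close> by blast
  qed
  then show ?thesis unfolding gamma_len_def modular_geod_len_def by simp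
qed

lemma gamma_len_ge: "real n * ln 4 \<le> gamma_len n"
proof -
  obtain u v where M: "slope_elt n = (2*u+v, u+3 * v, u+v, u+2 * v)" "u \<ge> 1" "v \<ge> 0"
    and det_uv: "u*(u+v) - v\<^sup>2 = 1" and grow: "2^n \<le> u+v" "u+v \<le> 3^n"
    by (rule slope_elt_entries)
  define t where "t = (2*u+v) + (u+2 * v)"
  have "(4::int)^n = (2^n)\<^sup>2" by (simp add: power2_eq_square flip: power_mult_distrib)
  also have "\<dots> \<le> (u+v)\<^sup>2" using grow(1) by (intro power_mono) simp_all
  finally have "4^n \<le> (u+v)\<^sup>2" .
  moreover have "(1::int) \<le> 4^n" by simp
  moreover have "t\<^sup>2 = 9 * (u+v)\<^sup>2"
    unfolding t_def by (simp add: power2_eq_square algebra_simps)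
  ultimately have "2 * 4^n + 2 \<le> t\<^sup>2" by linarith
  then have "2 * 4^n + 2 \<le> (real_of_int t)\<^sup>2"
    using of_int_le_iff[of "2 * 4^n + 2" "t\<^sup>2", where 'a = real] by simp
  then have trace_ge: "4^n \<le> (real_of_int t)\<^sup>2 / 2 - 1" by linarith
  have "real n * ln 4 = ln (4^n)" by (simp add: ln_realpow)
  also have "\<dots> \<le> ln ((real_of_int t)\<^sup>2 / 2 - 1)"
    using trace_ge by (rule ln_mono) simp
  also have "\<dots> \<le> gamma_len n"
    unfolding gamma_len_eq_transl_len M(1) t_def
    by (rule ln_trace_le_transl_len) (use det_uv M(2,3) in \<open>simp_all add: power2_eq_square algebra_simps\<close>)
  finally show ?thesis .
qed

lemma gamma_len_le:
  assumes "n \<ge> 1"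
  shows "gamma_len n \<le> real n * ln 171"
proof -
  obtain u v where M: "slope_elt n = (2*u+v, u+3 * v, u+v, u+2 * v)" "u \<ge> 1" "v \<ge> 0"
    and det_uv: "u*(u+v) - v\<^sup>2 = 1" and grow: "2^n \<le> u+v" "u+v \<le> 3^n"
    by (rule slope_elt_entries)
  define e where "e = 2 + ((u+3 * v) + (u+v))\<^sup>2 + ((u+2 * v) - (2*u+v))\<^sup>2"
  have "e \<le> 19 * (u+v)\<^sup>2"
  proof -
    have "19 * (u+v)\<^sup>2 - e = 14 * (u * u) + 24 * (u * v) + 2 * (v * v) - 2"
      unfolding e_def by (simp add: power2_eq_square algebra_simps)
    moreover have "1 \<le> u * u" "0 \<le> u * v" "0 \<le> v * v"
      using M(2,3) mult_mono[of 1 u 1 u] by simp_all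
    ultimately show ?thesis by linarith
  qed
  also have "(u+v)\<^sup>2 \<le> (3^n)\<^sup>2" using grow(2) M(2,3) by (intro power_mono) simp_all
  also have "(3^n)\<^sup>2 = (9::int)^n" by (simp add: power2_eq_square flip: power_mult_distrib)
  finally have "e \<le> 19 * 9^n" by simp
  then have e_le: "real_of_int e \<le> 19 * 9^n"
    using of_int_le_iff[of e "19 * 9^n", where 'a = real] by simp
  have "gamma_len n \<le> ln (real_of_int e)"
    unfolding gamma_len_eq_transl_len M(1) e_def
    by (rule order_trans[OF transl_len_le_ln]) (use det_uv in \<open>simp_all add: power2_eq_square algebra_simps\<close>)
  also have "\<dots> \<le> ln (19 * 9^n)"
    using e_le by (rule ln_mono) (simp add: e_def add_pos_nonneg)
  also have "\<dots> = ln 19 + real n * ln 9" by (simp add: ln_mult_pos ln_realpow)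
  also have "\<dots> \<le> real n * ln 19 + real n * ln 9"
    using assms by (simp add: mult_le_cancel_right1)
  also have "\<dots> = real n * ln 171"
    using ln_mult_pos[of 19 9] by (simp add: algebra_simps)
  finally show ?thesis .
qed

lemma sum_atLeastAtMost_quadratic_bounds:
  fixes f :: "nat \<Rightarrow> real"
  assumes "\<And>i. i \<ge> 1 \<Longrightarrow> a * real i \<le> f i" "\<And>i. i \<ge> 1 \<Longrightarrow> f i \<le> b * real i"
    and "0 \<le> a" "0 \<le> b"
  shows "a / 2 * (real n)\<^sup>2 \<le> (\<Sum>i=1..n. f i)" "(\<Sum>i=1..n. f i) \<le> b * (real n)\<^sup>2"
proof -
  have gauss: "(\<Sum>i=1..n. c * real i) = c * (real n * (real n + 1) / 2)" for c
    using double_gauss_sum_from_Suc_0[of n, where 'a = real]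
    by (simp add: sum_distrib_left[symmetric])
  have "a / 2 * (real n)\<^sup>2 \<le> a * (real n * (real n + 1) / 2)"
    using assms(3) by (simp add: power2_eq_square field_simps)
  also have "\<dots> \<le> (\<Sum>i=1..n. f i)"
    unfolding gauss[symmetric] by (rule sum_mono) (simp add: assms(1))
  finally show "a / 2 * (real n)\<^sup>2 \<le> (\<Sum>i=1..n. f i)" .
  have "(\<Sum>i=1..n. f i) \<le> b * (real n * (real n + 1) / 2)"
    unfolding gauss[symmetric] by (rule sum_mono) (simp add: assms(2))
  also have "\<dots> \<le> b * (real n)\<^sup>2"
    using assms(4) le_square[of n] by (intro mult_left_mono) (simp_all add: power2_eq_square field_simps flip: of_nat_mult)
  finally show "(\<Sum>i=1..n. f i) \<le> b * (real n)\<^sup>2" .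
qed

theorem lemma7p2:
  shows "\<exists>A B C D :: real. A > 0 \<and> C > 0 \<and>
    (\<forall>n::nat. n \<ge> 1 \<longrightarrow>
       A * (real n)\<^sup>2 + B \<le> total_len n \<and> total_len n \<le> C * (real n)\<^sup>2 + D)"
proof (intro exI conjI allI impI)
  fix n :: nat
  note bounds = sum_atLeastAtMost_quadratic_bounds[of "ln 4" gamma_len "ln 171" n]
  show "ln 4 / 2 * (real n)\<^sup>2 + 0 \<le> total_len n" "total_len n \<le> ln 171 * (real n)\<^sup>2 + 0"
    unfolding total_len_def using bounds gamma_len_ge gamma_len_le by (simp_all add: mult.commute)
qed simp_all

end
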